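(* An oval in $\mathbb{R}^{2}$ is an ellipse centered at the origin if and only if its support function $h$ satisfies $(h^{2})'''+4(h^{2})'=0$.
   Context: Identify $\mathbb{R}^{2}\cong\mathbb{C}$. An oval is a $C^{2}$ embedded closed plane curve with nowhere-vanishing curvature. The support function of an oval $\mathcal{O}$ is $h(\theta)=\sup_{p\in\mathcal{O}}p\cdot e^{i\theta}$, regarded as a $2\pi$-periodic function of $\theta\in\mathbb{R}$. *)

theory Defs
  imports "HOL-Analysis.Analysis"
begin

definition oval_param :: "(real \<Rightarrow> complex) \<Rightarrow> bool" where
  "oval_param g \<longleftrightarrow>
     (\<forall>t. g (t + 1) = g t) \<and>
     inj_on g {0..<1} \<and>
     (\<exists>g1 g2.
        (\<forall>t. (g has_vector_derivative g1 t) (at t)) \<and>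
        (\<forall>t. (g1 has_vector_derivative g2 t) (at t)) \<and>
        continuous_on UNIV g2 \<and>
        (\<forall>t. g1 t \<noteq> 0) \<and>
        (\<forall>t. Im (cnj (g1 t) * g2 t) / (cmod (g1 t)) ^ 3 \<noteq> 0))"

definition is_oval :: "complex set \<Rightarrow> bool" where
  "is_oval C \<longleftrightarrow> (\<exists>g. oval_param g \<and> C = g ` {0..1})"

definition support_fun :: "complex set \<Rightarrow> real \<Rightarrow> real" where
  "support_fun C \<theta> = (SUP p\<in>C. p \<bullet> cis \<theta>)"

definition is_centered_ellipse :: "complex set \<Rightarrow> bool" where
  "is_centered_ellipse E \<longleftrightarrow>
     (\<exists>a b \<phi>. a > 0 \<and> b > 0 \<and>
        E = {cis \<phi> * Complex (a * cos t) (b * sin t) | t. True})"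

end

theory Submission
  imports Defs
begin

text \<open>
  The support function of the ellipse with semi-axes \<open>a, b\<close> rotated by \<open>\<phi>\<close> satisfies
  \<open>h\<^sup>2 = (a\<^sup>2 + b\<^sup>2)/2 + (a\<^sup>2 - b\<^sup>2)/2 \<cdot> cos (2\<theta> - 2\<phi>)\<close>, and the solutions of
  \<open>y''' + 4y' = 0\<close> are exactly the functions \<open>c + R cos (2\<theta> - \<psi>)\<close>. So it remains to show
  that an oval \<open>C\<close> with \<open>h\<^sup>2 = c + R cos (2\<theta> - \<psi>)\<close> is an ellipse. Then \<open>h\<^sup>2\<close> is
  \<open>\<pi>\<close>-periodic, and since an oval (having nonzero curvature) lies in no line,
  \<open>h(\<theta>) + h(\<theta> + \<pi>) > 0\<close>; hence \<open>h > 0\<close>, \<open>c \<plusminus> R > 0\<close>, and \<open>h\<close> is the support function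
  of the ellipse \<open>E\<close> with \<open>a\<^sup>2 = c + R\<close>, \<open>b\<^sup>2 = c - R\<close>. Every point of \<open>C\<close> lies in the
  filled ellipse, and every point of \<open>E\<close> is the only point of the filled ellipse maximising
  the linear functional normal to \<open>E\<close> there, so \<open>E \<subseteq> C\<close>. Finally, a Jordan curve cannot
  properly contain another one, so \<open>C = E\<close>.
\<close>

section \<open>Support functions and ellipses\<close>

lemma polar_coordinates_real:
  fixes u v :: real
  obtains \<psi> where "u = sqrt (u\<^sup>2 + v\<^sup>2) * cos \<psi>" and "v = sqrt (u\<^sup>2 + v\<^sup>2) * sin \<psi>"
proof
  have "rcis (cmod (Complex u v)) (Arg (Complex u v)) = Complex u v"
    by (rule rcis_cmod_Arg)
  then show "u = sqrt (u\<^sup>2 + v\<^sup>2) * cos (Arg (Complex u v))"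
    and "v = sqrt (u\<^sup>2 + v\<^sup>2) * sin (Arg (Complex u v))"
    by (metis Re_rcis complex.sel(1) complex_norm, metis Im_rcis complex.sel(2) complex_norm)
qed

lemma inner_cis_mult_Complex:
  "(cis \<phi> * Complex x y) \<bullet> cis \<theta> = x * cos (\<theta> - \<phi>) + y * sin (\<theta> - \<phi>)"
  by (simp add: inner_complex_def cos_diff sin_diff algebra_simps)

lemma Im_cnj_mult_eq_0_if_orthogonal:
  fixes v w e :: complex
  assumes "v \<bullet> e = 0" "w \<bullet> e = 0" "e \<noteq> 0"
  shows "Im (cnj v * w) = 0"
proof -
  have "Im (cnj v * w) * Re e = 0" "Im (cnj v * w) * Im e = 0"
    using assms(1,2) unfolding inner_complex_def by simp_all algebra+
  then show ?thesis using assms(3) by (auto simp: complex_eq_iff)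
qed

definition ellipse :: "real \<Rightarrow> real \<Rightarrow> real \<Rightarrow> complex set" where
  "ellipse a b \<phi> = range (\<lambda>t. cis \<phi> * Complex (a * cos t) (b * sin t))"

lemma is_centered_ellipse_iff:
  "is_centered_ellipse E \<longleftrightarrow> (\<exists>a b \<phi>. a > 0 \<and> b > 0 \<and> E = ellipse a b \<phi>)"
  unfolding is_centered_ellipse_def ellipse_def by (simp add: full_SetCompr_eq)

lemma support_fun_upper:
  assumes "compact C" "p \<in> C"
  shows "p \<bullet> cis \<theta> \<le> support_fun C \<theta>"
proof -
  have "compact ((\<lambda>p. p \<bullet> cis \<theta>) ` C)"
    by (rule compact_continuous_image[OF _ assms(1)]) (intro continuous_intros)
  then have "bdd_above ((\<lambda>p. p \<bullet> cis \<theta>) ` C)"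
    by (intro bounded_imp_bdd_above compact_imp_bounded)
  then show ?thesis unfolding support_fun_def by (rule cSUP_upper[OF assms(2)])
qed

lemma support_fun_attained:
  assumes "compact C" "C \<noteq> {}"
  obtains p where "p \<in> C" "p \<bullet> cis \<theta> = support_fun C \<theta>"
proof -
  have "continuous_on C (\<lambda>p. p \<bullet> cis \<theta>)" by (intro continuous_intros)
  then obtain p where "p \<in> C" and max: "\<forall>q\<in>C. q \<bullet> cis \<theta> \<le> p \<bullet> cis \<theta>"
    using continuous_attains_sup[OF assms] by blast
  moreover have "support_fun C \<theta> = p \<bullet> cis \<theta>"
    unfolding support_fun_def using \<open>p \<in> C\<close> max by (intro cSup_eq_maximum) auto
  ultimately show ?thesis using that by simp
qed

lemma support_fun_antipodal_sum_pos:
  assumes "compact C" "p \<in> C" "q \<in> C" "p \<bullet> cis \<theta> \<noteq> q \<bullet> cis \<theta>"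
  shows "support_fun C \<theta> + support_fun C (\<theta> + pi) > 0"
proof -
  have "cis (\<theta> + pi) = - cis \<theta>" by (simp add: cis_mult[symmetric])
  then have "- (x \<bullet> cis \<theta>) \<le> support_fun C (\<theta> + pi)" if "x \<in> C" for x
    using support_fun_upper[OF assms(1) that, of "\<theta> + pi"] by simp
  moreover have "x \<bullet> cis \<theta> \<le> support_fun C \<theta>" if "x \<in> C" for x
    using support_fun_upper[OF assms(1) that] .
  ultimately show ?thesis
    using assms(2-4) by (smt (verit))
qed

lemma support_fun_ellipse:
  "support_fun (ellipse a b \<phi>) \<theta> = sqrt ((a * cos (\<theta> - \<phi>))\<^sup>2 + (b * sin (\<theta> - \<phi>))\<^sup>2)"
proof -
  define u where "u = a * cos (\<theta> - \<phi>)"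
  define v where "v = b * sin (\<theta> - \<phi>)"
  obtain \<psi> where u: "u = sqrt (u\<^sup>2 + v\<^sup>2) * cos \<psi>" and v: "v = sqrt (u\<^sup>2 + v\<^sup>2) * sin \<psi>"
    by (rule polar_coordinates_real)
  have "(cis \<phi> * Complex (a * cos t) (b * sin t)) \<bullet> cis \<theta> = sqrt (u\<^sup>2 + v\<^sup>2) * cos (t - \<psi>)" for t
  proof -
    have "(cis \<phi> * Complex (a * cos t) (b * sin t)) \<bullet> cis \<theta> = u * cos t + v * sin t"
      unfolding inner_cis_mult_Complex u_def v_def by simp
    also have "\<dots> = sqrt (u\<^sup>2 + v\<^sup>2) * cos (t - \<psi>)"
      by (subst u, subst v) (simp add: cos_diff algebra_simps)
    finally show ?thesis .
  qed
  then have "support_fun (ellipse a b \<phi>) \<theta> = (SUP t. sqrt (u\<^sup>2 + v\<^sup>2) * cos (t - \<psi>))"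
    unfolding support_fun_def ellipse_def image_image by simp
  also have "\<dots> = sqrt (u\<^sup>2 + v\<^sup>2)"
    by (rule cSup_eq_maximum) (auto intro!: image_eqI[where x = \<psi>] mult_left_le)
  finally show ?thesis unfolding u_def v_def .
qed

lemma support_fun_ellipse_sq:
  "(support_fun (ellipse a b \<phi>) \<theta>)\<^sup>2 = (a\<^sup>2 + b\<^sup>2) / 2 + (a\<^sup>2 - b\<^sup>2) / 2 * cos (2 * \<theta> - 2 * \<phi>)"
proof -
  have "(support_fun (ellipse a b \<phi>) \<theta>)\<^sup>2 = (a * cos (\<theta> - \<phi>))\<^sup>2 + (b * sin (\<theta> - \<phi>))\<^sup>2"
    by (simp add: support_fun_ellipse)
  also have "\<dots> = (a\<^sup>2 + b\<^sup>2) / 2 + (a\<^sup>2 - b\<^sup>2) / 2 * cos (2 * (\<theta> - \<phi>))"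
    unfolding cos_double power_mult_distrib sin_squared_eq by (simp add: field_simps)
  finally show ?thesis by (simp add: algebra_simps)
qed

lemma ellipse_inside_of_below_support:
  fixes a b x y :: real
  assumes "a > 0" "b > 0"
    and below: "\<And>\<psi>. x * cos \<psi> + y * sin \<psi> \<le> sqrt ((a * cos \<psi>)\<^sup>2 + (b * sin \<psi>)\<^sup>2)"
  shows "(x / a)\<^sup>2 + (y / b)\<^sup>2 \<le> 1"
proof -
  define Q where "Q = (x / a)\<^sup>2 + (y / b)\<^sup>2"
  define D where "D = sqrt ((x / a\<^sup>2)\<^sup>2 + (y / b\<^sup>2)\<^sup>2)"
  \<comment> \<open>\<open>\<psi>\<close> is the normal direction at \<open>(x, y)\<close> of the ellipse through that point\<close>
  obtain \<psi> where c: "x / a\<^sup>2 = D * cos \<psi>" and s: "y / b\<^sup>2 = D * sin \<psi>"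
    unfolding D_def by (rule polar_coordinates_real)
  have "D * (x * cos \<psi> + y * sin \<psi>) = x * (x / a\<^sup>2) + y * (y / b\<^sup>2)"
    unfolding c s by (simp add: algebra_simps)
  also have "\<dots> = Q"
    unfolding Q_def by (simp add: power2_eq_square)
  finally have lhs: "D * (x * cos \<psi> + y * sin \<psi>) = Q" .
  have "D\<^sup>2 * ((a * cos \<psi>)\<^sup>2 + (b * sin \<psi>)\<^sup>2) = a\<^sup>2 * (x / a\<^sup>2)\<^sup>2 + b\<^sup>2 * (y / b\<^sup>2)\<^sup>2"
    unfolding c s by (simp add: algebra_simps)
  also have "\<dots> = Q"
    unfolding Q_def using assms(1,2) by (simp add: power2_eq_square)
  finally have "D * sqrt ((a * cos \<psi>)\<^sup>2 + (b * sin \<psi>)\<^sup>2) = sqrt Q"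
    unfolding D_def by (metis real_sqrt_mult real_sqrt_pow2 zero_le_power2 add_nonneg_nonneg)
  with lhs have "Q \<le> sqrt Q"
    using mult_left_mono[OF below[of \<psi>], of D] D_def by simp
  moreover have "Q \<ge> 0" unfolding Q_def by simp
  ultimately have "Q * Q \<le> sqrt Q * sqrt Q"
    by (intro mult_mono) auto
  then have "Q * Q \<le> Q * 1" using \<open>Q \<ge> 0\<close> by simp
  then show ?thesis
    unfolding Q_def[symmetric] using \<open>Q \<ge> 0\<close> by (cases "Q = 0") auto
qed

lemma ellipse_unique_maximizer:
  fixes a b x y t :: real
  assumes "a > 0" "b > 0" and inside: "(x / a)\<^sup>2 + (y / b)\<^sup>2 \<le> 1"
    and max: "x * (b * cos t) + y * (a * sin t) \<ge> a * b"
  shows "x = a * cos t" "y = b * sin t"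
proof -
  define X Y where "X = x / a" and "Y = y / b"
  have "X * cos t + Y * sin t = (x * (b * cos t) + y * (a * sin t)) / (a * b)"
    using assms(1,2) unfolding X_def Y_def by (simp add: field_simps)
  then have "X * cos t + Y * sin t \<ge> 1"
    using max assms(1,2) by simp
  then have "(X - cos t)\<^sup>2 + (Y - sin t)\<^sup>2 \<le> 0"
    using inside unfolding X_def[symmetric] Y_def[symmetric]
    by (simp add: power2_diff algebra_simps)
  then have "X = cos t" "Y = sin t"
    by (smt (verit) sum_power2_eq_zero_iff zero_le_power2 right_minus_eq)+
  then show "x = a * cos t" "y = b * sin t"
    using assms(1,2) unfolding X_def Y_def by (simp_all add: field_simps)
qed

lemma ellipse_normal_direction:
  fixes a b t :: real
  assumes "a > 0" "b > 0"
  obtains M \<psi> where "b * cos t = M * cos \<psi>" "a * sin t = M * sin \<psi>"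
    and "M * sqrt ((a * cos \<psi>)\<^sup>2 + (b * sin \<psi>)\<^sup>2) = a * b"
proof -
  define M where "M = sqrt ((b * cos t)\<^sup>2 + (a * sin t)\<^sup>2)"
  obtain \<psi> where c: "b * cos t = M * cos \<psi>" and s: "a * sin t = M * sin \<psi>"
    unfolding M_def by (rule polar_coordinates_real)
  have "M\<^sup>2 * ((a * cos \<psi>)\<^sup>2 + (b * sin \<psi>)\<^sup>2) = a\<^sup>2 * (M * cos \<psi>)\<^sup>2 + b\<^sup>2 * (M * sin \<psi>)\<^sup>2"
    by (simp add: algebra_simps)
  also have "\<dots> = (a * b)\<^sup>2 * ((cos t)\<^sup>2 + (sin t)\<^sup>2)"
    unfolding c[symmetric] s[symmetric] by algebra
  finally have "sqrt (M\<^sup>2 * ((a * cos \<psi>)\<^sup>2 + (b * sin \<psi>)\<^sup>2)) = a * b"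
    using assms by simp
  then have "M * sqrt ((a * cos \<psi>)\<^sup>2 + (b * sin \<psi>)\<^sup>2) = a * b"
    unfolding real_sqrt_mult by (simp add: M_def)
  with c s show ?thesis by (rule that)
qed

lemma ellipse_subset_of_support_eq:
  assumes "compact C" "C \<noteq> {}" "a > 0" "b > 0"
    and support: "\<And>\<theta>. support_fun C \<theta> = support_fun (ellipse a b \<phi>) \<theta>"
  shows "ellipse a b \<phi> \<subseteq> C"
proof
  have rotated: "p = cis \<phi> * Complex (Re (cis (- \<phi>) * p)) (Im (cis (- \<phi>) * p))" for p
    by (simp only: complex_surj mult.assoc[symmetric] cis_mult) simp
  have inside: "(x / a)\<^sup>2 + (y / b)\<^sup>2 \<le> 1" if "cis \<phi> * Complex x y \<in> C" for x y
  proof (rule ellipse_inside_of_below_support[OF assms(3,4)])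
    fix \<psi>
    show "x * cos \<psi> + y * sin \<psi> \<le> sqrt ((a * cos \<psi>)\<^sup>2 + (b * sin \<psi>)\<^sup>2)"
      using support_fun_upper[OF assms(1) that, of "\<phi> + \<psi>"]
      by (simp add: support support_fun_ellipse inner_cis_mult_Complex)
  qed
  fix q assume "q \<in> ellipse a b \<phi>"
  then obtain t where q: "q = cis \<phi> * Complex (a * cos t) (b * sin t)"
    unfolding ellipse_def by blast
  obtain M \<psi> where c: "b * cos t = M * cos \<psi>" and s: "a * sin t = M * sin \<psi>"
    and normal: "M * sqrt ((a * cos \<psi>)\<^sup>2 + (b * sin \<psi>)\<^sup>2) = a * b"
    using ellipse_normal_direction[OF assms(3,4)] .
  obtain p where "p \<in> C" and p_max: "p \<bullet> cis (\<phi> + \<psi>) = support_fun C (\<phi> + \<psi>)"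
    using support_fun_attained[OF assms(1,2)] .
  obtain x y where p: "p = cis \<phi> * Complex x y" using rotated by blast
  have "x * cos \<psi> + y * sin \<psi> = sqrt ((a * cos \<psi>)\<^sup>2 + (b * sin \<psi>)\<^sup>2)"
    using p_max by (simp add: p support support_fun_ellipse inner_cis_mult_Complex)
  moreover have "x * (b * cos t) + y * (a * sin t) = M * (x * cos \<psi> + y * sin \<psi>)"
    unfolding c s by (simp add: algebra_simps)
  ultimately have "x * (b * cos t) + y * (a * sin t) = a * b"
    using normal by simp
  then have "x = a * cos t" "y = b * sin t"
    using ellipse_unique_maximizer[OF assms(3,4) inside] \<open>p \<in> C\<close> p by auto
  then show "q \<in> C" using \<open>p \<in> C\<close> p q by simp
qed

lemma ellipse_homeomorphic_circle:
  assumes "a \<noteq> 0" "b \<noteq> 0"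
  shows "ellipse a b \<phi> homeomorphic sphere (0::complex) 1"
proof -
  define L where "L z = cis \<phi> * Complex (a * Re z) (b * Im z)" for z
  have "linear L"
    by (rule linearI) (simp_all add: L_def complex_eq_iff algebra_simps scaleR_conv_of_real)
  moreover have "inj L"
  proof (rule injI)
    fix x y assume "L x = L y"
    then have "Complex (a * Re x) (b * Im x) = Complex (a * Re y) (b * Im y)"
      by (simp add: L_def)
    then show "x = y" using assms by (simp add: complex_eq_iff)
  qed
  moreover have "ellipse a b \<phi> = L ` sphere 0 1"
  proof -
    have circle: "sphere 0 1 = range cis"
    proof (intro equalityI subsetI)
      fix z :: complex assume "z \<in> sphere 0 1"
      then have "z = cis (Arg z)" using rcis_cmod_Arg[of z] by (simp add: rcis_def)
      then show "z \<in> range cis" by (rule image_eqI) simp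
    qed auto
    show ?thesis unfolding ellipse_def circle image_image by (simp add: L_def)
  qed
  ultimately show ?thesis
    by (subst homeomorphic_sym) (simp add: linear_homeomorphic_image)
qed

section \<open>Ovals as Jordan curves\<close>

lemma homeomorphic_circle_subset_eq:
  fixes X Y :: "complex set"
  assumes X: "X homeomorphic sphere (0::complex) 1" and Y: "Y homeomorphic sphere (0::complex) 1"
    and "Y \<subseteq> X"
  shows "Y = X"
proof (rule ccontr)
  \<comment> \<open>a point \<open>c \<in> X - Y\<close> would embed the circle \<open>Y\<close> into \<open>X - {c}\<close>, which is a line\<close>
  assume "Y \<noteq> X"
  with \<open>Y \<subseteq> X\<close> obtain c where "c \<in> X" "c \<notin> Y" by blast
  obtain H H' :: "complex \<Rightarrow> complex" where H: "homeomorphism X (sphere 0 1) H H'"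
    using X homeomorphic_def by blast
  obtain F F' :: "complex \<Rightarrow> complex" where F: "homeomorphism (sphere 0 1) Y F F'"
    using Y homeomorphic_def homeomorphism_symD by metis
  have "sphere 0 1 - {H c} homeomorphic {z::complex. 1 \<bullet> z = 0}"
    using homeomorphism_image1[OF H] \<open>c \<in> X\<close>
    by (intro homeomorphic_punctured_sphere_hyperplane) auto
  then obtain k k' :: "complex \<Rightarrow> complex"
    where k: "homeomorphism (sphere 0 1 - {H c}) {z. 1 \<bullet> z = 0} k k'"
    unfolding homeomorphic_def by blast
  have HF: "H (F x) \<in> sphere 0 1 - {H c}" if "x \<in> sphere 0 1" for x
  proof -
    have "F x \<in> X - {c}"
      using homeomorphism_image1[OF F] \<open>Y \<subseteq> X\<close> \<open>c \<notin> Y\<close> that by blast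
    moreover from this have "H (F x) \<noteq> H c"
      using homeomorphism_apply1[OF H] \<open>c \<in> X\<close> by (metis DiffE singletonI)
    ultimately show ?thesis
      using homeomorphism_image1[OF H] by blast
  qed
  define f where "f x = Im (k (H (F x)))" for x
  have "continuous_on (sphere 0 1) (\<lambda>x. H (F x))"
    using homeomorphism_image1[OF F] \<open>Y \<subseteq> X\<close>
    by (intro continuous_on_compose2[OF homeomorphism_cont1[OF H] homeomorphism_cont1[OF F]]) auto
  moreover have "(\<lambda>x. H (F x)) ` sphere 0 1 \<subseteq> sphere 0 1 - {H c}"
    using HF by (rule image_subsetI)
  ultimately have "continuous_on (sphere 0 1) (\<lambda>x. k (H (F x)))"
    by (rule continuous_on_compose2[OF homeomorphism_cont1[OF k]])
  then have "continuous_on (sphere 0 1) f"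
    unfolding f_def by (rule continuous_on_Im)
  moreover have "inj_on f (sphere 0 1)"
  proof
    fix x y assume x: "x \<in> sphere 0 1" and y: "y \<in> sphere 0 1" and "f x = f y"
    note HF_x = HF[OF x] HF[OF y]
    then have "Re (k (H (F x))) = 0" "Re (k (H (F y))) = 0"
      using homeomorphism_image1[OF k] by (auto simp: inner_complex_def)
    with \<open>f x = f y\<close> have "k (H (F x)) = k (H (F y))"
      by (simp add: f_def complex_eq_iff)
    with HF_x have "H (F x) = H (F y)"
      by (metis homeomorphism_apply1[OF k])
    moreover have "F x \<in> X" "F y \<in> X"
      using homeomorphism_image1[OF F] \<open>Y \<subseteq> X\<close> x y by auto
    ultimately have "F x = F y"
      using homeomorphism_apply1[OF H] by metis
    then show "x = y"
      using homeomorphism_apply1[OF F] x y by metis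
  qed
  ultimately have "DIM(complex) \<le> DIM(real)"
    by (rule no_embedding_sphere_lowdim) simp
  then show False by simp
qed

lemma oval_param_continuous:
  assumes "oval_param g"
  shows "continuous_on UNIV g"
proof -
  obtain g1 where "\<And>t. (g has_vector_derivative g1 t) (at t)"
    using assms unfolding oval_param_def by blast
  then show ?thesis
    by (intro continuous_on_vector_derivative) (auto intro: has_vector_derivative_at_within)
qed

lemma oval_param_simple_loop:
  assumes "oval_param g"
  shows "simple_path g" "pathfinish g = pathstart g"
proof -
  have periodic: "g 1 = g 0" and inj: "inj_on g {0..<1}"
    using assms unfolding oval_param_def by (metis add_0_left, blast)
  show "pathfinish g = pathstart g"
    by (simp add: pathfinish_def pathstart_def periodic)
  show "simple_path g"
  proof
    show "path g"
      unfolding path_def using oval_param_continuous[OF assms] by (rule continuous_on_subset) simp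
    fix x y :: real assume xy: "0 \<le> x" "x < y" "y \<le> 1" "g x = g y"
    have "y = 1"
    proof (rule ccontr)
      assume "y \<noteq> 1"
      with xy have "x = y" using inj_onD[OF inj] by simp
      with xy show False by simp
    qed
    with xy have "x = 0" using inj_onD[OF inj, of x 0] periodic by simp
    with \<open>y = 1\<close> show "x = 0 \<and> y = 1" by simp
  qed
qed

lemma oval_compact: "is_oval C \<Longrightarrow> compact C"
  unfolding is_oval_def
  by (metis compact_Icc compact_continuous_image continuous_on_subset oval_param_continuous subset_UNIV)

lemma oval_homeomorphic_circle: "is_oval C \<Longrightarrow> C homeomorphic sphere (0::complex) 1"
  unfolding is_oval_def
  by (metis oval_param_simple_loop homeomorphic_simple_path_image_circle path_image_def zero_less_one)

lemma oval_not_in_line: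
  assumes "is_oval C" "e \<noteq> 0"
  shows "\<exists>p\<in>C. \<exists>q\<in>C. p \<bullet> e \<noteq> q \<bullet> e"
proof (rule ccontr)
  assume "\<not> ?thesis"
  then have flat: "p \<bullet> e = q \<bullet> e" if "p \<in> C" "q \<in> C" for p q
    using that by blast
  obtain g where "oval_param g" "C = g ` {0..1}"
    using assms(1) unfolding is_oval_def by blast
  then obtain g1 g2 where g1: "\<And>t. (g has_vector_derivative g1 t) (at t)"
    and g2: "\<And>t. (g1 has_vector_derivative g2 t) (at t)"
    and curved: "\<And>t. Im (cnj (g1 t) * g2 t) / cmod (g1 t) ^ 3 \<noteq> 0"
    unfolding oval_param_def by blast
  have deriv_inner: "((\<lambda>t. f t \<bullet> e) has_real_derivative f' t \<bullet> e) (at t)"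
    if "\<And>t. (f has_vector_derivative f' t) (at t)" for f f' :: "real \<Rightarrow> complex" and t
    unfolding has_real_derivative_iff_has_vector_derivative
    by (rule bounded_linear.has_vector_derivative[OF bounded_linear_inner_left that])
  have locally_const: "D = 0"
    if "(f has_real_derivative D) (at s)" "s \<in> {0<..<1}" "\<And>t. t \<in> {0<..<1} \<Longrightarrow> f t = f s"
    for f :: "real \<Rightarrow> real" and D s
  proof (rule DERIV_local_const[OF that(1)])
    show "0 < min s (1 - s)" using that(2) by simp
    have "t \<in> {0<..<1}" if "\<bar>s - t\<bar> < min s (1 - s)" for t
      using that by (auto simp: abs_less_iff)
    then show "\<forall>t. \<bar>s - t\<bar> < min s (1 - s) \<longrightarrow> f s = f t"
      using that(3) by (metis)
  qed
  have flat_g: "g t \<bullet> e = g s \<bullet> e" if "t \<in> {0..1}" "s \<in> {0..1}" for t s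
    using that by (intro flat) (auto simp: \<open>C = g ` {0..1}\<close>)
  have "g1 s \<bullet> e = 0" if "s \<in> {0<..<1}" for s
    using that by (intro locally_const[OF deriv_inner[OF g1]] flat_g) auto
  then have "g2 (1/2) \<bullet> e = 0"
    by (intro locally_const[OF deriv_inner[OF g2]]) auto
  moreover have "g1 (1/2) \<bullet> e = 0"
    using \<open>\<And>s. s \<in> {0<..<1} \<Longrightarrow> g1 s \<bullet> e = 0\<close> by simp
  ultimately have "Im (cnj (g1 (1/2)) * g2 (1/2)) = 0"
    using assms(2) by (intro Im_cnj_mult_eq_0_if_orthogonal)
  with curved[of "1/2"] show False by simp
qed

section \<open>The equation \<open>y''' + \<omega>\<^sup>2 y' = 0\<close>\<close>

lemma harmonic_oscillator_zero:
  fixes z w :: "real \<Rightarrow> real"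
  assumes "\<omega> \<noteq> 0"
    and z': "\<And>t. (z has_real_derivative w t) (at t)"
    and w': "\<And>t. (w has_real_derivative - (\<omega>\<^sup>2 * z t)) (at t)"
    and "z 0 = 0" "w 0 = 0"
  shows "z t = 0"
proof -
  define E where "E = (\<lambda>t. (w t)\<^sup>2 + \<omega>\<^sup>2 * (z t)\<^sup>2)"
  have "(E has_real_derivative 0) (at t)" for t
    unfolding E_def by (auto intro!: derivative_eq_intros z' w' simp: algebra_simps)
  then have "E t = E 0" by (simp add: DERIV_isconst_all)
  then have "(w t)\<^sup>2 + \<omega>\<^sup>2 * (z t)\<^sup>2 = 0"
    unfolding E_def using assms(4,5) by simp
  then show ?thesis
    using assms(1) by (smt (verit) mult_eq_0_iff power_eq_0_iff zero_le_power2 mult_nonneg_nonneg)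
qed

lemma third_order_ode_solution:
  fixes u f1 f2 f3 :: "real \<Rightarrow> real"
  assumes "\<omega> \<noteq> 0"
    and u': "\<And>\<theta>. (u has_real_derivative f1 \<theta>) (at \<theta>)"
    and f1': "\<And>\<theta>. (f1 has_real_derivative f2 \<theta>) (at \<theta>)"
    and f2': "\<And>\<theta>. (f2 has_real_derivative f3 \<theta>) (at \<theta>)"
    and ode: "\<And>\<theta>. f3 \<theta> + \<omega>\<^sup>2 * f1 \<theta> = 0"
  obtains c A B where "\<And>\<theta>. u \<theta> = c + A * cos (\<omega> * \<theta>) + B * sin (\<omega> * \<theta>)"
proof -
  define \<alpha> \<beta> where "\<alpha> = f1 0" and "\<beta> = f2 0 / \<omega>"
  \<comment> \<open>\<open>f1\<close> minus the solution of \<open>y'' = -\<omega>\<^sup>2 y\<close> with the same initial data\<close>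
  define z where "z = (\<lambda>\<theta>. f1 \<theta> - \<alpha> * cos (\<omega> * \<theta>) - \<beta> * sin (\<omega> * \<theta>))"
  define w where "w = (\<lambda>\<theta>. f2 \<theta> + \<alpha> * \<omega> * sin (\<omega> * \<theta>) - \<beta> * \<omega> * cos (\<omega> * \<theta>))"
  have "(z has_real_derivative w \<theta>) (at \<theta>)" for \<theta>
    unfolding z_def w_def by (auto intro!: derivative_eq_intros f1' simp: algebra_simps)
  moreover have "(w has_real_derivative - (\<omega>\<^sup>2 * z \<theta>)) (at \<theta>)" for \<theta>
  proof -
    have "f3 \<theta> = - (\<omega>\<^sup>2 * f1 \<theta>)"
      using ode[of \<theta>] by simp
    then show ?thesis
      unfolding w_def z_def
      by (auto intro!: derivative_eq_intros f2' simp: algebra_simps power2_eq_square)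
  qed
  ultimately have f1: "f1 \<theta> = \<alpha> * cos (\<omega> * \<theta>) + \<beta> * sin (\<omega> * \<theta>)" for \<theta>
    using harmonic_oscillator_zero[OF assms(1), of z w \<theta>] assms(1)
    unfolding z_def w_def \<alpha>_def \<beta>_def by simp
  define r where "r = (\<lambda>\<theta>. u \<theta> - \<alpha> / \<omega> * sin (\<omega> * \<theta>) + \<beta> / \<omega> * cos (\<omega> * \<theta>))"
  have "(r has_real_derivative 0) (at \<theta>)" for \<theta>
    unfolding r_def using assms(1)
    by (auto intro!: derivative_eq_intros u' simp: f1 algebra_simps)
  then have "u \<theta> = r 0 + (- \<beta> / \<omega>) * cos (\<omega> * \<theta>) + \<alpha> / \<omega> * sin (\<omega> * \<theta>)" for \<theta>
    using DERIV_isconst_all[of r \<theta> 0] unfolding r_def by simp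
  then show ?thesis by (rule that)
qed

lemma third_order_ode_iff_sinusoid:
  fixes u :: "real \<Rightarrow> real"
  assumes "\<omega> \<noteq> 0"
  shows "(\<exists>f1 f2 f3 :: real \<Rightarrow> real.
            (\<forall>\<theta>. (u has_real_derivative f1 \<theta>) (at \<theta>)) \<and>
            (\<forall>\<theta>. (f1 has_real_derivative f2 \<theta>) (at \<theta>)) \<and>
            (\<forall>\<theta>. (f2 has_real_derivative f3 \<theta>) (at \<theta>)) \<and>
            (\<forall>\<theta>. f3 \<theta> + \<omega>\<^sup>2 * f1 \<theta> = 0))
     \<longleftrightarrow> (\<exists>c R \<psi>. \<forall>\<theta>. u \<theta> = c + R * cos (\<omega> * \<theta> - \<psi>))"
proof
  assume "\<exists>f1 f2 f3 :: real \<Rightarrow> real.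
            (\<forall>\<theta>. (u has_real_derivative f1 \<theta>) (at \<theta>)) \<and>
            (\<forall>\<theta>. (f1 has_real_derivative f2 \<theta>) (at \<theta>)) \<and>
            (\<forall>\<theta>. (f2 has_real_derivative f3 \<theta>) (at \<theta>)) \<and>
            (\<forall>\<theta>. f3 \<theta> + \<omega>\<^sup>2 * f1 \<theta> = 0)"
  then obtain c A B where u: "\<And>\<theta>. u \<theta> = c + A * cos (\<omega> * \<theta>) + B * sin (\<omega> * \<theta>)"
    using third_order_ode_solution[OF assms] by metis
  define R where "R = sqrt (A\<^sup>2 + B\<^sup>2)"
  obtain \<psi> where A: "A = R * cos \<psi>" and B: "B = R * sin \<psi>"
    unfolding R_def by (rule polar_coordinates_real)
  have "u \<theta> = c + R * cos (\<omega> * \<theta> - \<psi>)" for \<theta>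
    unfolding u by (simp add: A B cos_diff algebra_simps)
  then show "\<exists>c R \<psi>. \<forall>\<theta>. u \<theta> = c + R * cos (\<omega> * \<theta> - \<psi>)" by blast
next
  assume "\<exists>c R \<psi>. \<forall>\<theta>. u \<theta> = c + R * cos (\<omega> * \<theta> - \<psi>)"
  then obtain c R \<psi> where u: "u = (\<lambda>\<theta>. c + R * cos (\<omega> * \<theta> - \<psi>))" by blast
  have "((\<lambda>\<theta>. c + R * cos (\<omega> * \<theta> - \<psi>)) has_real_derivative - (R * \<omega> * sin (\<omega> * \<theta> - \<psi>))) (at \<theta>)"
    and "((\<lambda>\<theta>. - (R * \<omega> * sin (\<omega> * \<theta> - \<psi>))) has_real_derivative - (R * \<omega>\<^sup>2 * cos (\<omega> * \<theta> - \<psi>))) (at \<theta>)"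
    and "((\<lambda>\<theta>. - (R * \<omega>\<^sup>2 * cos (\<omega> * \<theta> - \<psi>))) has_real_derivative R * \<omega>^3 * sin (\<omega> * \<theta> - \<psi>)) (at \<theta>)"
    for \<theta>
    by (auto intro!: derivative_eq_intros simp: power2_eq_square power3_eq_cube)
  moreover have "R * \<omega>^3 * sin (\<omega> * \<theta> - \<psi>) + \<omega>\<^sup>2 * - (R * \<omega> * sin (\<omega> * \<theta> - \<psi>)) = 0" for \<theta>
    by (simp add: power2_eq_square power3_eq_cube)
  ultimately show "\<exists>f1 f2 f3 :: real \<Rightarrow> real.
            (\<forall>\<theta>. (u has_real_derivative f1 \<theta>) (at \<theta>)) \<and>
            (\<forall>\<theta>. (f1 has_real_derivative f2 \<theta>) (at \<theta>)) \<and>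
            (\<forall>\<theta>. (f2 has_real_derivative f3 \<theta>) (at \<theta>)) \<and>
            (\<forall>\<theta>. f3 \<theta> + \<omega>\<^sup>2 * f1 \<theta> = 0)"
    unfolding u
    by (intro exI[of _ "\<lambda>\<theta>. - (R * \<omega> * sin (\<omega> * \<theta> - \<psi>))"]
        exI[of _ "\<lambda>\<theta>. - (R * \<omega>\<^sup>2 * cos (\<omega> * \<theta> - \<psi>))"]
        exI[of _ "\<lambda>\<theta>. R * \<omega>^3 * sin (\<omega> * \<theta> - \<psi>)"]) blast
qed

section \<open>Ovals with sinusoidal squared support function\<close>

lemma oval_support_pos:
  assumes "is_oval C" and antipodal: "\<And>\<theta>. (support_fun C (\<theta> + pi))\<^sup>2 = (support_fun C \<theta>)\<^sup>2"
  shows "support_fun C \<theta> > 0"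
proof -
  obtain p q where "p \<in> C" "q \<in> C" "p \<bullet> cis \<theta> \<noteq> q \<bullet> cis \<theta>"
    using oval_not_in_line[OF assms(1), of "cis \<theta>"] by auto
  then have "support_fun C \<theta> + support_fun C (\<theta> + pi) > 0"
    by (intro support_fun_antipodal_sum_pos oval_compact assms(1))
  moreover have "\<bar>support_fun C (\<theta> + pi)\<bar> = \<bar>support_fun C \<theta>\<bar>"
    using antipodal by (metis power2_eq_iff abs_minus_cancel)
  ultimately show ?thesis by linarith
qed

lemma oval_eq_ellipse_of_support_eq:
  assumes "is_oval C" "a > 0" "b > 0"
    and "\<And>\<theta>. support_fun C \<theta> = support_fun (ellipse a b \<phi>) \<theta>"
  shows "C = ellipse a b \<phi>"
proof -
  have "C \<noteq> {}" using assms(1) unfolding is_oval_def by auto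
  then have "ellipse a b \<phi> \<subseteq> C"
    using assms by (intro ellipse_subset_of_support_eq oval_compact) auto
  then show ?thesis
    using assms(2,3)
    by (intro homeomorphic_circle_subset_eq[symmetric] oval_homeomorphic_circle ellipse_homeomorphic_circle assms(1)) auto
qed

lemma oval_is_ellipse_of_sq_support_sinusoid:
  assumes "is_oval C" and h2: "\<And>\<theta>. (support_fun C \<theta>)\<^sup>2 = c + R * cos (2 * \<theta> - \<psi>)"
  shows "is_centered_ellipse C"
proof -
  have "cos (2 * (\<theta> + pi) - \<psi>) = cos (2 * \<theta> - \<psi>)" for \<theta>
    using cos_periodic[of "2 * \<theta> - \<psi>"] by (simp add: algebra_simps)
  then have "(support_fun C (\<theta> + pi))\<^sup>2 = (support_fun C \<theta>)\<^sup>2" for \<theta>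
    unfolding h2 by simp
  then have pos: "support_fun C \<theta> > 0" for \<theta>
    using oval_support_pos[OF assms(1)] by blast
  define \<phi> where "\<phi> = \<psi> / 2"
  have "c + R = (support_fun C \<phi>)\<^sup>2"
    using h2[of \<phi>] by (simp add: \<phi>_def)
  moreover have "c - R = (support_fun C (\<phi> + pi / 2))\<^sup>2"
    using h2[of "\<phi> + pi / 2"] by (simp add: \<phi>_def algebra_simps)
  ultimately have "c + R > 0" "c - R > 0"
    using pos[of \<phi>] pos[of "\<phi> + pi / 2"] by simp_all
  define a b where "a = sqrt (c + R)" and "b = sqrt (c - R)"
  have "a > 0" "b > 0" unfolding a_def b_def using \<open>c + R > 0\<close> \<open>c - R > 0\<close> by simp_all
  have "support_fun C \<theta> = support_fun (ellipse a b \<phi>) \<theta>" for \<theta>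
  proof (rule power2_eq_imp_eq)
    show "(support_fun C \<theta>)\<^sup>2 = (support_fun (ellipse a b \<phi>) \<theta>)\<^sup>2"
      unfolding h2 support_fun_ellipse_sq a_def b_def \<phi>_def
      using \<open>c + R > 0\<close> \<open>c - R > 0\<close> by (simp add: field_simps)
  qed (use pos[of \<theta>] in \<open>simp_all add: support_fun_ellipse\<close>)
  then have "C = ellipse a b \<phi>"
    by (rule oval_eq_ellipse_of_support_eq[OF assms(1) \<open>a > 0\<close> \<open>b > 0\<close>])
  then show ?thesis
    unfolding is_centered_ellipse_iff using \<open>a > 0\<close> \<open>b > 0\<close> by blast
qed

lemma oval_centered_ellipse_iff_sq_support_sinusoid:
  assumes "is_oval C"
  shows "is_centered_ellipse C \<longleftrightarrow> (\<exists>c R \<psi>. \<forall>\<theta>. (support_fun C \<theta>)\<^sup>2 = c + R * cos (2 * \<theta> - \<psi>))"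
proof
  assume "is_centered_ellipse C"
  then obtain a b \<phi> where "C = ellipse a b \<phi>"
    unfolding is_centered_ellipse_iff by blast
  then show "\<exists>c R \<psi>. \<forall>\<theta>. (support_fun C \<theta>)\<^sup>2 = c + R * cos (2 * \<theta> - \<psi>)"
    using support_fun_ellipse_sq by blast
next
  assume "\<exists>c R \<psi>. \<forall>\<theta>. (support_fun C \<theta>)\<^sup>2 = c + R * cos (2 * \<theta> - \<psi>)"
  then show "is_centered_ellipse C"
    using oval_is_ellipse_of_sq_support_sinusoid[OF assms] by blast
qed

theorem mainTheorem12:
  fixes C :: "complex set"
  assumes "is_oval C"
  shows "is_centered_ellipse C \<longleftrightarrow>
    (\<exists>f1 f2 f3 :: real \<Rightarrow> real.
       (\<forall>\<theta>. ((\<lambda>x. (support_fun C x)\<^sup>2) has_real_derivative f1 \<theta>) (at \<theta>)) \<and>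
       (\<forall>\<theta>. (f1 has_real_derivative f2 \<theta>) (at \<theta>)) \<and>
       (\<forall>\<theta>. (f2 has_real_derivative f3 \<theta>) (at \<theta>)) \<and>
       (\<forall>\<theta>. f3 \<theta> + 4 * f1 \<theta> = 0))"
  using oval_centered_ellipse_iff_sq_support_sinusoid[OF assms]
    third_order_ode_iff_sinusoid[of 2 "\<lambda>x. (support_fun C x)\<^sup>2"]
  by simp

end
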